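(* Let $\mathscr D:\mathscr N=\mathscr N_1\cup\cdots\cup\mathscr N_k$ be a pairwise min-max decomposition of a chemical reaction network $\mathscr N$ such that every linkage class of $\mathscr N$ contains at most one common complex. Then $\mathscr D$ is incidence independent.
   Context: A CRN $\mathscr N=(\mathscr S,\mathscr C,\mathscr R)$ is viewed as a directed graph on its complexes with arcs its reactions; linkage classes are the connected components of the underlying undirected graph. A decomposition $\mathscr N=\mathscr N_1\cup\cdots\cup\mathscr N_k$ ($k\ge2$) is given by a partition $\{\mathscr R_1,\dots,\mathscr R_k\}$ of the reaction set; the subnetwork $\mathscr N_i$ has reactions $\mathscr R_i$ and complex set $\mathscr C_i$ consisting of the complexes occurring in reactions of $\mathscr R_i$. The set $\mathscr C_{\mathscr D}$ of common complexes consists of the complexes lying in the complex sets of at least two distinct subnetworks. The decomposition is pairwise min-max (PMM) if for all $i\ne j$, either $\mathscr C_i\cap\mathscr C_j=\varnothing$ or $\mathscr C_i\cap\mathscr C_j=\mathscr C_{\mathscr D}$. With $n,\ell$ the numbers of complexes and linkage classes of $\mathscr N$ and $n_i,\ell_i$ those of $\mathscr N_i$, the decomposition is incidence independent if the image of the incidence map of $\mathscr N$ (the linear map $\mathbb R^{\mathscr R}\to\mathbb R^{\mathscr C}$ sending a reaction $y\to y'$ to $\omega_{y'}-\omega_y$) is the direct sum of the images of the incidence maps of the $\mathscr N_i$, equivalently $n-\ell=\sum_i(n_i-\ell_i)$. *)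

theory Defs
  imports Complex_Main
begin

text \<open>A chemical reaction network is viewed as a directed graph on its complexes
(of an arbitrary type 'c, e.g. nonnegative integer vectors over the species);
a reaction y \<rightarrow> y' is the pair (y, y'). Only the reaction set is needed:
the complex set consists of the complexes occurring in reactions.\<close>

definition complexes :: "('c \<times> 'c) set \<Rightarrow> 'c set" where
  "complexes R = fst ` R \<union> snd ` R"

definition crn :: "('c \<times> 'c) set \<Rightarrow> bool" where
  "crn R \<longleftrightarrow> finite R \<and> (\<forall>(y, y') \<in> R. y \<noteq> y')"

definition linked :: "('c \<times> 'c) set \<Rightarrow> 'c \<Rightarrow> 'c \<Rightarrow> bool" where
  "linked R x y \<longleftrightarrow> (x, y) \<in> (R \<union> R\<inverse>)\<^sup>*"

definition linkage_classes :: "('c \<times> 'c) set \<Rightarrow> 'c set set" where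
  "linkage_classes R = {{y \<in> complexes R. linked R x y} | x. x \<in> complexes R}"

definition incidence_map :: "('c \<times> 'c) set \<Rightarrow> (('c \<times> 'c) \<Rightarrow> real) \<Rightarrow> 'c \<Rightarrow> real" where
  "incidence_map R a = (\<lambda>c. \<Sum>r\<in>R. a r *
      ((if c = snd r then 1 else 0) - (if c = fst r then 1 else 0)))"

definition incidence_image :: "('c \<times> 'c) set \<Rightarrow> ('c \<Rightarrow> real) set" where
  "incidence_image R = range (incidence_map R)"

definition decomposition :: "('c \<times> 'c) set \<Rightarrow> nat \<Rightarrow> (nat \<Rightarrow> ('c \<times> 'c) set) \<Rightarrow> bool" where
  "decomposition R k Rs \<longleftrightarrow> k \<ge> 2 \<and> (\<forall>i<k. Rs i \<noteq> {}) \<and>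
     (\<Union>i<k. Rs i) = R \<and> (\<forall>i<k. \<forall>j<k. i \<noteq> j \<longrightarrow> Rs i \<inter> Rs j = {})"

definition common_complexes :: "nat \<Rightarrow> (nat \<Rightarrow> ('c \<times> 'c) set) \<Rightarrow> 'c set" where
  "common_complexes k Rs =
     {c. \<exists>i<k. \<exists>j<k. i \<noteq> j \<and> c \<in> complexes (Rs i) \<and> c \<in> complexes (Rs j)}"

definition pmm :: "nat \<Rightarrow> (nat \<Rightarrow> ('c \<times> 'c) set) \<Rightarrow> bool" where
  "pmm k Rs \<longleftrightarrow> (\<forall>i<k. \<forall>j<k. i \<noteq> j \<longrightarrow>
     complexes (Rs i) \<inter> complexes (Rs j) = {} \<or>
     complexes (Rs i) \<inter> complexes (Rs j) = common_complexes k Rs)"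

definition incidence_independent ::
  "('c \<times> 'c) set \<Rightarrow> nat \<Rightarrow> (nat \<Rightarrow> ('c \<times> 'c) set) \<Rightarrow> bool" where
  "incidence_independent R k Rs \<longleftrightarrow>
     incidence_image R =
       {(\<lambda>c. \<Sum>i<k. v i c) | v. \<forall>i<k. v i \<in> incidence_image (Rs i)} \<and>
     (\<forall>v. (\<forall>i<k. v i \<in> incidence_image (Rs i)) \<and> (\<lambda>c. \<Sum>i<k. v i c) = (\<lambda>c. 0)
          \<longrightarrow> (\<forall>i<k. v i = (\<lambda>c. 0)))"

end

theory Submission
  imports Defs
begin

text \<open>Let \<open>v\<^sub>i \<in> Im(incidence of \<N>\<^sub>i)\<close> sum to zero. Each \<open>v\<^sub>i\<close> vanishes
off the complexes of \<open>\<N>\<^sub>i\<close>, so at a complex lying in a single subnetwork the sum has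
one term and \<open>v\<^sub>i\<close> vanishes there. Every reaction stays inside one linkage class \<open>L\<close>
of \<open>\<N>\<close>, hence the entries of \<open>v\<^sub>i\<close> over \<open>L\<close> sum to zero; as \<open>L\<close> contains at most
one common complex and \<open>v\<^sub>i\<close> vanishes at all the other complexes of \<open>L\<close>, it vanishes
at that one too. That the images add up is just additivity of the incidence map over the
partition of the reactions.\<close>

lemma incidence_map_UN_disjoint:
  assumes "finite I" "\<forall>i\<in>I. finite (Rs i)"
    and "\<forall>i\<in>I. \<forall>j\<in>I. i \<noteq> j \<longrightarrow> Rs i \<inter> Rs j = {}"
  shows "incidence_map (\<Union>i\<in>I. Rs i) a c = (\<Sum>i\<in>I. incidence_map (Rs i) a c)"
  unfolding incidence_map_def by (subst sum.UNION_disjoint[OF assms]) simp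

lemma incidence_image_UN_disjoint:
  assumes "finite I" "\<forall>i\<in>I. finite (Rs i)"
    and disjoint: "\<forall>i\<in>I. \<forall>j\<in>I. i \<noteq> j \<longrightarrow> Rs i \<inter> Rs j = {}"
  shows "incidence_image (\<Union>i\<in>I. Rs i) =
    {(\<lambda>c. \<Sum>i\<in>I. v i c) | v. \<forall>i\<in>I. v i \<in> incidence_image (Rs i)}"
proof (intro equalityI subsetI)
  fix w assume "w \<in> incidence_image (\<Union>i\<in>I. Rs i)"
  then obtain a where "w = incidence_map (\<Union>i\<in>I. Rs i) a"
    unfolding incidence_image_def by auto
  then have "w = (\<lambda>c. \<Sum>i\<in>I. incidence_map (Rs i) a c)"
    using incidence_map_UN_disjoint[OF assms] by auto
  then show "w \<in> {(\<lambda>c. \<Sum>i\<in>I. v i c) | v. \<forall>i\<in>I. v i \<in> incidence_image (Rs i)}"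
    unfolding incidence_image_def by auto
next
  fix w assume "w \<in> {(\<lambda>c. \<Sum>i\<in>I. v i c) | v. \<forall>i\<in>I. v i \<in> incidence_image (Rs i)}"
  then obtain v where w: "w = (\<lambda>c. \<Sum>i\<in>I. v i c)"
    and v: "\<forall>i\<in>I. v i \<in> incidence_image (Rs i)" by auto
  have "\<forall>i\<in>I. \<exists>b. v i = incidence_map (Rs i) b"
    using v unfolding incidence_image_def by auto
  then obtain b where b: "\<And>i. i \<in> I \<Longrightarrow> v i = incidence_map (Rs i) (b i)" by metis
  \<comment> \<open>the subnetworks share no reactions, so their rate vectors glue together\<close>
  define a where "a r = (\<Sum>i\<in>I. if r \<in> Rs i then b i r else 0)" for r
  have a_eq: "a r = b i r" if "i \<in> I" "r \<in> Rs i" for i r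
  proof -
    have "a r = (\<Sum>j\<in>{i}. if r \<in> Rs j then b j r else 0)"
      unfolding a_def using that disjoint assms(1) by (intro sum.mono_neutral_right) auto
    then show ?thesis using that by simp
  qed
  have "v i = incidence_map (Rs i) a" if "i \<in> I" for i
    unfolding b[OF that] incidence_map_def using a_eq[OF that] by (intro ext sum.cong) auto
  then have "w = incidence_map (\<Union>i\<in>I. Rs i) a"
    using w incidence_map_UN_disjoint[OF assms] by auto
  then show "w \<in> incidence_image (\<Union>i\<in>I. Rs i)" unfolding incidence_image_def by auto
qed

lemma incidence_image_vanishes_outside_complexes:
  assumes "v \<in> incidence_image S" "c \<notin> complexes S"
  shows "v c = 0"
proof -
  obtain a where "v = incidence_map S a" using assms(1) unfolding incidence_image_def by auto
  moreover have "\<forall>r\<in>S. c \<noteq> fst r \<and> c \<noteq> snd r" using assms(2) unfolding complexes_def by force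
  ultimately show ?thesis unfolding incidence_map_def by simp
qed

lemma sum_incidence_map_closed_set:
  assumes "finite S" "finite L" "\<forall>r\<in>S. fst r \<in> L \<longleftrightarrow> snd r \<in> L"
  shows "(\<Sum>c\<in>L. incidence_map S a c) = 0"
proof -
  have "(\<Sum>c\<in>L. incidence_map S a c) = (\<Sum>r\<in>S. \<Sum>c\<in>L. a r *
      ((if c = snd r then 1 else 0) - (if c = fst r then 1 else 0)))"
    unfolding incidence_map_def by (rule sum.swap)
  also have "\<dots> = (\<Sum>r\<in>S. a r *
      ((\<Sum>c\<in>L. if c = snd r then 1 else 0) - (\<Sum>c\<in>L. if c = fst r then 1 else 0)))"
    by (simp add: sum_distrib_left[symmetric] sum_subtractf)
  also have "\<dots> = 0" using assms(2,3) by (intro sum.neutral) (simp add: sum.delta)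
  finally show ?thesis .
qed

lemma finite_complexes: "finite R \<Longrightarrow> finite (complexes R)"
  unfolding complexes_def by simp

lemma complexes_mono: "S \<subseteq> R \<Longrightarrow> complexes S \<subseteq> complexes R"
  unfolding complexes_def by auto

lemma linkage_class_subset_complexes: "L \<in> linkage_classes R \<Longrightarrow> L \<subseteq> complexes R"
  unfolding linkage_classes_def by auto

lemma linkage_class_closed:
  assumes "L \<in> linkage_classes R" "r \<in> R"
  shows "fst r \<in> L \<longleftrightarrow> snd r \<in> L"
proof -
  obtain x where L: "L = {y \<in> complexes R. linked R x y}"
    using assms(1) unfolding linkage_classes_def by auto
  have "fst r \<in> complexes R" "snd r \<in> complexes R"
    using assms(2) unfolding complexes_def by auto
  moreover have "(fst r, snd r) \<in> (R \<union> R\<inverse>)\<^sup>*" "(snd r, fst r) \<in> (R \<union> R\<inverse>)\<^sup>*"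
    using assms(2) by (auto intro!: r_into_rtrancl)
  then have "(x, fst r) \<in> (R \<union> R\<inverse>)\<^sup>* \<longleftrightarrow> (x, snd r) \<in> (R \<union> R\<inverse>)\<^sup>*"
    using rtrancl_trans by metis
  ultimately show ?thesis unfolding L linked_def by simp
qed

lemma linkage_class_of_complex:
  assumes "c \<in> complexes R"
  obtains L where "L \<in> linkage_classes R" "c \<in> L"
proof
  show "{y \<in> complexes R. linked R c y} \<in> linkage_classes R"
    unfolding linkage_classes_def using assms by auto
  show "c \<in> {y \<in> complexes R. linked R c y}"
    unfolding linked_def using assms by auto
qed

lemma incidence_image_vanishes_on_linkage_class:
  assumes "finite R" "S \<subseteq> R" "v \<in> incidence_image S"
    and "L \<in> linkage_classes R" "c \<in> L" "\<forall>y\<in>L. y \<noteq> c \<longrightarrow> v y = 0"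
  shows "v c = 0"
proof -
  obtain a where a: "v = incidence_map S a" using assms(3) unfolding incidence_image_def by auto
  have "finite L"
    using finite_complexes[OF assms(1)] linkage_class_subset_complexes[OF assms(4)]
    by (rule finite_subset[rotated])
  have "finite S" using assms(1,2) by (rule finite_subset[rotated])
  have "fst r \<in> L \<longleftrightarrow> snd r \<in> L" if "r \<in> S" for r
    using linkage_class_closed[OF assms(4)] assms(2) that by blast
  then have "(\<Sum>y\<in>L. v y) = 0"
    unfolding a using sum_incidence_map_closed_set[OF \<open>finite S\<close> \<open>finite L\<close>] by blast
  moreover have "(\<Sum>y\<in>L. v y) = (\<Sum>y\<in>{c}. v y)"
    using assms(5,6) by (intro sum.mono_neutral_right[OF \<open>finite L\<close>]) auto
  ultimately show ?thesis by simp
qed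

lemma incidence_image_vanishes_at_private_complex:
  assumes "\<forall>j<k. v j \<in> incidence_image (Rs j)" "(\<Sum>j<k. v j c) = 0"
    and "i < k" "c \<notin> common_complexes k Rs"
  shows "v i c = 0"
proof (cases "c \<in> complexes (Rs i)")
  case False
  with assms(1,3) show ?thesis by (intro incidence_image_vanishes_outside_complexes) auto
next
  case True
  have "c \<notin> complexes (Rs j)" if "j < k" "j \<noteq> i" for j
    using True assms(3,4) that unfolding common_complexes_def by auto
  then have "v j c = 0" if "j < k" "j \<noteq> i" for j
    using assms(1) that by (intro incidence_image_vanishes_outside_complexes) auto
  then have "(\<Sum>j<k. v j c) = (\<Sum>j\<in>{i}. v j c)"
    using assms(3) by (intro sum.mono_neutral_right) auto
  then show ?thesis using assms(2) by simp
qed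

lemma incidence_images_independent:
  assumes "finite R" "\<forall>i<k. Rs i \<subseteq> R"
    and one_common: "\<forall>L \<in> linkage_classes R. card (L \<inter> common_complexes k Rs) \<le> 1"
    and v: "\<forall>i<k. v i \<in> incidence_image (Rs i)" and sum_zero: "(\<lambda>c. \<Sum>i<k. v i c) = (\<lambda>c. 0)"
  shows "\<forall>i<k. v i = (\<lambda>c. 0)"
proof (intro allI impI ext)
  fix i c assume "i < k"
  have off_common: "v i y = 0" if "y \<notin> common_complexes k Rs" for y
  proof (rule incidence_image_vanishes_at_private_complex[OF v _ \<open>i < k\<close> that])
    show "(\<Sum>j<k. v j y) = 0" using fun_cong[OF sum_zero, of y] by simp
  qed
  show "v i c = 0"
  proof (cases "c \<in> complexes (Rs i) \<and> c \<in> common_complexes k Rs")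
    case False
    with off_common v \<open>i < k\<close> show ?thesis
      by (auto intro: incidence_image_vanishes_outside_complexes)
  next
    case True
    then have "c \<in> complexes R" using complexes_mono assms(2) \<open>i < k\<close> by blast
    then obtain L where L: "L \<in> linkage_classes R" "c \<in> L" by (rule linkage_class_of_complex)
    have "finite (L \<inter> common_complexes k Rs)"
      using finite_complexes[OF assms(1)] linkage_class_subset_complexes[OF L(1)]
      by (auto intro: finite_subset)
    moreover have "card (L \<inter> common_complexes k Rs) \<le> 1" using one_common L(1) by blast
    ultimately have "y = c" if "y \<in> L" "y \<in> common_complexes k Rs" for y
      using L(2) True that by (auto simp: card_le_Suc0_iff_eq)
    then have "\<forall>y\<in>L. y \<noteq> c \<longrightarrow> v i y = 0" using off_common by blast
    moreover have "Rs i \<subseteq> R" "v i \<in> incidence_image (Rs i)" using assms(2) v \<open>i < k\<close> by auto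
    ultimately show ?thesis
      using incidence_image_vanishes_on_linkage_class[OF assms(1) _ _ L] by blast
  qed
qed

theorem proposition6:
  fixes R :: "('c \<times> 'c) set" and k :: nat and Rs :: "nat \<Rightarrow> ('c \<times> 'c) set"
  assumes "crn R"
    and "decomposition R k Rs"
    and "pmm k Rs"
    and "\<forall>L \<in> linkage_classes R. card (L \<inter> common_complexes k Rs) \<le> 1"
  shows "incidence_independent R k Rs"
proof -
  have "finite R" using assms(1) unfolding crn_def by auto
  have R: "R = (\<Union>i<k. Rs i)" and disjoint: "\<forall>i<k. \<forall>j<k. i \<noteq> j \<longrightarrow> Rs i \<inter> Rs j = {}"
    using assms(2) unfolding decomposition_def by auto
  then have sub: "\<forall>i<k. Rs i \<subseteq> R" by auto
  then have "\<forall>i<k. finite (Rs i)" using \<open>finite R\<close> finite_subset by blast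
  then have "incidence_image R =
      {(\<lambda>c. \<Sum>i<k. v i c) | v. \<forall>i<k. v i \<in> incidence_image (Rs i)}"
    using incidence_image_UN_disjoint[of "{..<k}" Rs] R disjoint by (simp add: Ball_def)
  then show ?thesis
    unfolding incidence_independent_def
    using incidence_images_independent[OF \<open>finite R\<close> sub assms(4)] by blast
qed

end
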